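(* Let $(X,\mu)$ be a $\sigma$-finite measure space and let $f,g\in L^1(X,\mu)$ be such that there exists $S\in S\mathcal{D}(L^1(X))$ with $f=Sg$. Then for every sublinear functional $\varphi:\mathbb{R}\to\mathbb{R}^+$, $$\int_X\varphi(f)\,d\mu\le\int_X\varphi(g)\,d\mu.$$
   Context: A sublinear functional $\varphi:\mathbb{R}\to\mathbb{R}^+$ is a convex and positively homogeneous map. $S\mathcal{D}(L^1(X))$ denotes the set of semi-doubly stochastic operators on $L^1(X)$: positive linear operators $T:L^1(X)\to L^1(X)$ with $\int_X Tf\,d\mu=\int_X f\,d\mu$ for all $f\in L^1(X)$ and $\int_X T^*\chi_E\,d\mu\le\mu(E)$ for every measurable $E$ with $\mu(E)<\infty$, where $T^*:L^\infty(X)\to L^\infty(X)$ is the Banach adjoint. *)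

theory Defs
  imports "HOL-Analysis.Analysis"
begin

text \<open>Elements of L^1(X) are represented by integrable real functions; an operator on
L^1 is a map on functions that sends integrable functions to integrable functions and
respects equality almost everywhere (so it is well defined on equivalence classes).
All identities between L^1 / L^infinity elements are understood almost everywhere.\<close>

definition L1_operator :: "'a measure \<Rightarrow> (('a \<Rightarrow> real) \<Rightarrow> ('a \<Rightarrow> real)) \<Rightarrow> bool" where
  "L1_operator M T \<longleftrightarrow>
     (\<forall>f. integrable M f \<longrightarrow> integrable M (T f)) \<and>
     (\<forall>f g. integrable M f \<longrightarrow> integrable M g \<longrightarrow> (AE x in M. f x = g x) \<longrightarrow>
            (AE x in M. T f x = T g x))"

definition L1_linear :: "'a measure \<Rightarrow> (('a \<Rightarrow> real) \<Rightarrow> ('a \<Rightarrow> real)) \<Rightarrow> bool" where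
  "L1_linear M T \<longleftrightarrow>
     (\<forall>f g (a::real) (b::real). integrable M f \<longrightarrow> integrable M g \<longrightarrow>
        (AE x in M. T (\<lambda>y. a * f y + b * g y) x = a * T f x + b * T g x))"

definition L1_positive :: "'a measure \<Rightarrow> (('a \<Rightarrow> real) \<Rightarrow> ('a \<Rightarrow> real)) \<Rightarrow> bool" where
  "L1_positive M T \<longleftrightarrow>
     (\<forall>f. integrable M f \<longrightarrow> (AE x in M. 0 \<le> f x) \<longrightarrow> (AE x in M. 0 \<le> T f x))"

definition Linf :: "'a measure \<Rightarrow> ('a \<Rightarrow> real) \<Rightarrow> bool" where
  "Linf M h \<longleftrightarrow> h \<in> borel_measurable M \<and> (\<exists>C. AE x in M. \<bar>h x\<bar> \<le> C)"

definition is_adjoint :: "'a measure \<Rightarrow> (('a \<Rightarrow> real) \<Rightarrow> ('a \<Rightarrow> real))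
     \<Rightarrow> (('a \<Rightarrow> real) \<Rightarrow> ('a \<Rightarrow> real)) \<Rightarrow> bool" where
  "is_adjoint M T Ts \<longleftrightarrow>
     (\<forall>h. Linf M h \<longrightarrow> Linf M (Ts h) \<and>
        (\<forall>f. integrable M f \<longrightarrow>
           (\<integral>x. Ts h x * f x \<partial>M) = (\<integral>x. h x * T f x \<partial>M)))"

definition semi_doubly_stochastic :: "'a measure \<Rightarrow> (('a \<Rightarrow> real) \<Rightarrow> ('a \<Rightarrow> real)) \<Rightarrow> bool" where
  "semi_doubly_stochastic M T \<longleftrightarrow>
     L1_operator M T \<and> L1_linear M T \<and> L1_positive M T \<and>
     (\<forall>f. integrable M f \<longrightarrow> (\<integral>x. T f x \<partial>M) = (\<integral>x. f x \<partial>M)) \<and>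
     (\<exists>Ts. is_adjoint M T Ts \<and>
        (\<forall>E \<in> sets M. emeasure M E < \<infinity> \<longrightarrow>
           (\<integral>\<^sup>+x. ennreal (Ts (indicator E) x) \<partial>M) \<le> emeasure M E))"

definition sublinear_functional :: "(real \<Rightarrow> real) \<Rightarrow> bool" where
  "sublinear_functional \<phi> \<longleftrightarrow>
     (\<forall>x. 0 \<le> \<phi> x) \<and> convex_on UNIV \<phi> \<and> (\<forall>t x. 0 \<le> t \<longrightarrow> \<phi> (t * x) = t * \<phi> x)"

end

theory Submission
  imports Defs
begin

text \<open>A sublinear functional on the reals is determined by its values at 1 and -1:
  \<phi>(x) = \<phi>(1) x+ + \<phi>(-1) x-, with both coefficients nonnegative. So it suffices to show
  that S does not increase the integrals of the positive part x+ and the negative part x-.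
  Writing g = g+ - g-, positivity and linearity give S g \<le> S g+ with S g+ \<ge> 0, hence
  (S g)+ \<le> S g+, and S preserves integrals; the negative part follows by applying this
  to -g.\<close>

lemma sublinear_functional_nonneg:
  "sublinear_functional \<phi> \<Longrightarrow> 0 \<le> \<phi> x"
  unfolding sublinear_functional_def by blast

lemma sublinear_functional_eq:
  assumes "sublinear_functional \<phi>"
  shows "\<phi> x = \<phi> 1 * max x 0 + \<phi> (-1) * max (- x) 0"
proof -
  have hom: "\<And>t y. 0 \<le> t \<Longrightarrow> \<phi> (t * y) = t * \<phi> y"
    using assms unfolding sublinear_functional_def by blast
  show ?thesis
  proof (cases "0 \<le> x")
    case True
    then show ?thesis using hom[of x 1] by simp
  next
    case False
    then show ?thesis using hom[of "- x" "-1"] by simp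
  qed
qed

lemma integral_sublinear_functional:
  assumes "sublinear_functional \<phi>" and f: "integrable M f"
  shows "(\<integral>x. \<phi> (f x) \<partial>M) =
    \<phi> 1 * (\<integral>x. max (f x) 0 \<partial>M) + \<phi> (-1) * (\<integral>x. max (- f x) 0 \<partial>M)"
proof -
  have "integrable M (\<lambda>x. max (f x) 0)" "integrable M (\<lambda>x. max (- f x) 0)"
    using f by (auto intro: integrable_max)
  then show ?thesis
    by (simp add: sublinear_functional_eq[OF assms(1), of "f _"])
qed

lemma L1_linear_uminus:
  assumes "L1_linear M S" and "integrable M g"
  shows "AE x in M. S (\<lambda>y. - g y) x = - S g x"
proof -
  have "AE x in M. S (\<lambda>y. (-1) * g y + 0 * g y) x = (-1) * S g x + 0 * S g x"
    using assms unfolding L1_linear_def by blast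
  then show ?thesis
    by simp
qed

lemma integral_pos_part_le:
  assumes op: "L1_operator M S" and lin: "L1_linear M S" and pos: "L1_positive M S"
    and pres: "\<And>h. integrable M h \<Longrightarrow> (\<integral>x. S h x \<partial>M) = (\<integral>x. h x \<partial>M)"
    and f: "integrable M f" and g: "integrable M g" and fS: "AE x in M. f x = S g x"
  shows "(\<integral>x. max (f x) 0 \<partial>M) \<le> (\<integral>x. max (g x) 0 \<partial>M)"
proof -
  define gp where "gp = (\<lambda>x. max (g x) 0)"
  define gn where "gn = (\<lambda>x. max (- g x) 0)"
  have gp: "integrable M gp" and gn: "integrable M gn"
    unfolding gp_def gn_def using g by (auto intro: integrable_max)
  have "g = (\<lambda>y. 1 * gp y + (-1) * gn y)"
    unfolding gp_def gn_def by auto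
  then have "AE x in M. S g x = 1 * S gp x + (-1) * S gn x"
    using lin gp gn unfolding L1_linear_def by metis
  moreover have "AE x in M. 0 \<le> S gp x" "AE x in M. 0 \<le> S gn x"
    using pos gp gn unfolding L1_positive_def gp_def gn_def by auto
  ultimately have "AE x in M. max (f x) 0 \<le> S gp x"
    using fS by eventually_elim auto
  moreover have "integrable M (S gp)"
    using op gp unfolding L1_operator_def by blast
  ultimately have "(\<integral>x. max (f x) 0 \<partial>M) \<le> (\<integral>x. S gp x \<partial>M)"
    using f by (intro integral_mono_AE) (auto intro: integrable_max)
  also have "\<dots> = (\<integral>x. gp x \<partial>M)"
    using pres gp by blast
  finally show ?thesis
    unfolding gp_def .
qed

lemma integral_neg_part_le:
  assumes op: "L1_operator M S" and lin: "L1_linear M S" and pos: "L1_positive M S"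
    and pres: "\<And>h. integrable M h \<Longrightarrow> (\<integral>x. S h x \<partial>M) = (\<integral>x. h x \<partial>M)"
    and f: "integrable M f" and g: "integrable M g" and fS: "AE x in M. f x = S g x"
  shows "(\<integral>x. max (- f x) 0 \<partial>M) \<le> (\<integral>x. max (- g x) 0 \<partial>M)"
proof -
  have "AE x in M. - f x = S (\<lambda>y. - g y) x"
    using fS L1_linear_uminus[OF lin g] by eventually_elim simp
  then show ?thesis
    using f g by (intro integral_pos_part_le[OF op lin pos pres]) auto
qed

theorem corollary4p2:
  fixes M :: "'a measure" and f g :: "'a \<Rightarrow> real"
  assumes "sigma_finite_measure M"
    and "integrable M f" and "integrable M g"
    and "\<exists>S. semi_doubly_stochastic M S \<and> (AE x in M. f x = S g x)"
  shows "\<forall>\<phi>. sublinear_functional \<phi> \<longrightarrow>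
           (\<integral>x. \<phi> (f x) \<partial>M) \<le> (\<integral>x. \<phi> (g x) \<partial>M)"
proof (intro allI impI)
  fix \<phi> :: "real \<Rightarrow> real"
  assume \<phi>: "sublinear_functional \<phi>"
  obtain S where "semi_doubly_stochastic M S" and fS: "AE x in M. f x = S g x"
    using assms(4) by blast
  then have S: "L1_operator M S" "L1_linear M S" "L1_positive M S"
    "\<And>h. integrable M h \<Longrightarrow> (\<integral>x. S h x \<partial>M) = (\<integral>x. h x \<partial>M)"
    unfolding semi_doubly_stochastic_def by blast+
  have "(\<integral>x. max (f x) 0 \<partial>M) \<le> (\<integral>x. max (g x) 0 \<partial>M)"
    "(\<integral>x. max (- f x) 0 \<partial>M) \<le> (\<integral>x. max (- g x) 0 \<partial>M)"
    using S assms(2,3) fS by (blast intro: integral_pos_part_le integral_neg_part_le)+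
  with sublinear_functional_nonneg[OF \<phi>, of 1] sublinear_functional_nonneg[OF \<phi>, of "-1"]
  show "(\<integral>x. \<phi> (f x) \<partial>M) \<le> (\<integral>x. \<phi> (g x) \<partial>M)"
    unfolding integral_sublinear_functional[OF \<phi> assms(2)]
      integral_sublinear_functional[OF \<phi> assms(3)]
    by (simp add: add_mono mult_left_mono)
qed

end
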